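(* Let $\mathcal{T}$ be an $l$-eligible microdata table and run the algorithm described in the context (with arbitrary tie-breaking). Suppose the algorithm does not terminate at the end of Phase One. Then $h(\ddot{R}) = h(\dot{R})$, where $\dot{R}$ is $R$ at the end of Phase One and $\ddot{R}$ is $R$ at the end of Phase Two.
   Context: A microdata table $\mathcal{T}$ is a multiset of $n$ tuples with values on $d$ quasi-identifier (QI) attributes and one sensitive attribute (SA). For a multiset $Q$ and SA value $v$, $h(Q,v)$ is the number of tuples in $Q$ with SA value $v$, $h(Q)=\max_v h(Q,v)$, pillars of $Q$ are the $v$ with $h(Q,v)=h(Q)$; $Q$ is $l$-eligible if $|Q|\ge l\cdot h(Q)$. Let $Q_1,\dots,Q_s$ be the maximal classes of tuples of $\mathcal{T}$ with identical values on all QI attributes; the algorithm only moves tuples from these groups into a set $R$ (initially empty). Phase One: for each $i$, while $Q_i$ is not $l$-eligible, move a tuple of a pillar of $Q_i$ to $R$; call the result $\dot{Q}_i,\dot{R}$; if $R$ is $l$-eligible, terminate. Phase Two terminology (w.r.t. current state): a group $Q$ is thin if $|Q|=l\cdot h(Q)$ and fat if $|Q|\ge l\cdot h(Q)+1$; $Q$ is conflicting if some pillar of $Q$ is a pillar of $R$ (such pillars are its conflicting pillars); $Q$ is dead if thin and conflicting, alive otherwise; an SA value $v$ is alive if some alive group $Q$ has $h(Q,v)>0$. Phase Two iterates: if no SA value is alive, Phase Two ends (go to Phase Three). Otherwise pick an alive SA value $v$ minimizing $h(R,v)$ and an alive group $Q$ with $h(Q,v)>0$ (ties arbitrary); if $Q$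 is fat move one tuple with SA value $v$ from $Q$ to $R$; if $Q$ is thin move one tuple of each pillar of $Q$ to $R$. If $R$ is now $l$-eligible, the algorithm terminates (ending Phase Two). $\ddot{Q}_i,\ddot{R}$ denote the state when Phase Two ends. *)

theory Defs
  imports Main "HOL-Library.Multiset"
begin

text \<open>Tuples are pairs (QI value, SA value); a table / group / R is a multiset of tuples.\<close>

definition h :: "('q \<times> 's) multiset \<Rightarrow> 's \<Rightarrow> nat" where
  "h Q v = count (image_mset snd Q) v"

definition hmax :: "('q \<times> 's) multiset \<Rightarrow> nat" where
  "hmax Q = Max (insert 0 ((\<lambda>v. h Q v) ` set_mset (image_mset snd Q)))"

definition pillar :: "('q \<times> 's) multiset \<Rightarrow> 's \<Rightarrow> bool" where
  "pillar Q v \<longleftrightarrow> h Q v = hmax Q"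

definition eligible :: "nat \<Rightarrow> ('q \<times> 's) multiset \<Rightarrow> bool" where
  "eligible l Q \<longleftrightarrow> size Q \<ge> l * hmax Q"

definition group :: "('q \<times> 's) multiset \<Rightarrow> 'q \<Rightarrow> ('q \<times> 's) multiset" where
  "group T q = filter_mset (\<lambda>t. fst t = q) T"

text \<open>Phase One on a single group: p1 l Q Q' D means the while loop started on Q
  ends with Q' after moving the tuples D to R.\<close>
inductive p1 :: "nat \<Rightarrow> ('q \<times> 's) multiset \<Rightarrow> ('q \<times> 's) multiset \<Rightarrow> ('q \<times> 's) multiset \<Rightarrow> bool"
  for l where
  stop: "eligible l Q \<Longrightarrow> p1 l Q Q {#}"
| move: "\<not> eligible l Q \<Longrightarrow> t \<in># Q \<Longrightarrow> pillar Q (snd t) \<Longrightarrow>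
         p1 l (Q - {#t#}) Q' D \<Longrightarrow> p1 l Q Q' (D + {#t#})"

definition thin :: "nat \<Rightarrow> ('q \<times> 's) multiset \<Rightarrow> bool" where
  "thin l Q \<longleftrightarrow> size Q = l * hmax Q"

definition fat :: "nat \<Rightarrow> ('q \<times> 's) multiset \<Rightarrow> bool" where
  "fat l Q \<longleftrightarrow> size Q \<ge> l * hmax Q + 1"

definition conflicting :: "('q \<times> 's) multiset \<Rightarrow> ('q \<times> 's) multiset \<Rightarrow> bool" where
  "conflicting Q R \<longleftrightarrow> (\<exists>v. pillar Q v \<and> pillar R v)"

definition dead :: "nat \<Rightarrow> ('q \<times> 's) multiset \<Rightarrow> ('q \<times> 's) multiset \<Rightarrow> bool" where
  "dead l Q R \<longleftrightarrow> thin l Q \<and> conflicting Q R"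

definition alive_val :: "nat \<Rightarrow> 'q set \<Rightarrow> ('q \<Rightarrow> ('q \<times> 's) multiset) \<Rightarrow> ('q \<times> 's) multiset \<Rightarrow> 's \<Rightarrow> bool" where
  "alive_val l I G R v \<longleftrightarrow> (\<exists>q\<in>I. \<not> dead l (G q) R \<and> h (G q) v > 0)"

text \<open>One iteration of Phase Two (only taken when the algorithm has not terminated,
  i.e. R is not l-eligible, and some SA value is alive).\<close>
definition p2_step :: "nat \<Rightarrow> 'q set \<Rightarrow>
    ('q \<Rightarrow> ('q \<times> 's) multiset) \<times> ('q \<times> 's) multiset \<Rightarrow>
    ('q \<Rightarrow> ('q \<times> 's) multiset) \<times> ('q \<times> 's) multiset \<Rightarrow> bool" where
  "p2_step l I S S' \<longleftrightarrow>
     (let G = fst S; R = snd S in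
      \<not> eligible l R \<and>
      (\<exists>v q. alive_val l I G R v \<and> (\<forall>w. alive_val l I G R w \<longrightarrow> h R v \<le> h R w) \<and>
             q \<in> I \<and> \<not> dead l (G q) R \<and> h (G q) v > 0 \<and>
             ((fat l (G q) \<and> (\<exists>t. t \<in># G q \<and> snd t = v \<and>
                  S' = (G(q := G q - {#t#}), R + {#t#}))) \<or>
              (thin l (G q) \<and> (\<exists>M. M \<subseteq># G q \<and>
                  image_mset snd M = mset_set {w. pillar (G q) w} \<and>
                  S' = (G(q := G q - M), R + M))))))"

end

theory Submission
  imports Defs
begin

text \<open>Phase Two never raises a pillar of R: a fat group only gives up a tuple of the least
  frequent alive value, which cannot be a pillar of R (otherwise all the more than l values of
  that group would be pillars of R, making R eligible); a thin group is moved only when it is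
  not conflicting, so it adds at most one tuple to each of finitely many non-pillars of R.
  Hence h(R) is invariant under every step of Phase Two; nothing about Phase One or about
  how Phase Two ends is needed.\<close>

lemma h_le_hmax: "h Q v \<le> hmax Q"
proof (cases "v \<in># image_mset snd Q")
  case True
  then show ?thesis unfolding hmax_def by (intro Max_ge) auto
next
  case False
  then have "h Q v = 0" unfolding h_def by (simp add: count_eq_zero_iff)
  then show ?thesis by simp
qed

lemma ex_pillar: "\<exists>v. pillar Q v"
proof (cases "image_mset snd Q = {#}")
  case True
  then show ?thesis by (simp add: pillar_def hmax_def h_def)
next
  case False
  let ?S = "(\<lambda>v. h Q v) ` set_mset (image_mset snd Q)"
  from False obtain w where w: "w \<in># image_mset snd Q" by blast
  have "0 < h Q w" using w by (simp add: h_def)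
  also have "h Q w \<le> hmax Q" by (rule h_le_hmax)
  finally have "hmax Q \<noteq> 0" by simp
  moreover have "hmax Q \<in> insert 0 ?S" unfolding hmax_def by (intro Max_in) auto
  ultimately show ?thesis by (auto simp: pillar_def)
qed

lemma hmax_eqI:
  assumes "\<And>w. h Q w \<le> m" and "h Q v = m"
  shows "hmax Q = m"
  using ex_pillar[of Q] assms h_le_hmax[of Q v] unfolding pillar_def by (metis le_antisym)

lemma h_union: "h (R + M) w = h R w + count (image_mset snd M) w"
  by (simp add: h_def)

lemma hmax_add_non_pillars:
  assumes distinct: "\<And>w. count (image_mset snd M) w \<le> 1"
    and non_pillars: "\<And>w. w \<in># image_mset snd M \<Longrightarrow> \<not> pillar R w"
  shows "hmax (R + M) = hmax R"
proof -
  have "h (R + M) w \<le> hmax R" for w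
  proof (cases "w \<in># image_mset snd M")
    case True
    then have "h R w \<noteq> hmax R" using non_pillars unfolding pillar_def by meson
    then show ?thesis using h_le_hmax[of R w] distinct[of w] unfolding h_union by linarith
  next
    case False
    then have "count (image_mset snd M) w = 0" by (simp add: count_eq_zero_iff)
    then show ?thesis using h_le_hmax[of R w] unfolding h_union by simp
  qed
  moreover obtain v where v: "pillar R v" using ex_pillar[of R] by auto
  then have "v \<notin># image_mset snd M" using non_pillars by meson
  then have "count (image_mset snd M) v = 0" by (simp add: count_eq_zero_iff)
  with v have "h (R + M) v = hmax R" unfolding h_union pillar_def by simp
  ultimately show ?thesis by (rule hmax_eqI)
qed

lemma sum_h_le_size:
  assumes "finite S"
  shows "(\<Sum>w\<in>S. h R w) \<le> size R"
proof -
  let ?N = "image_mset snd R"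
  have "(\<Sum>w\<in>S. h R w) = (\<Sum>w\<in>S \<inter> set_mset ?N. h R w)"
    using assms by (intro sum.mono_neutral_right) (auto simp: h_def count_eq_zero_iff)
  also have "\<dots> = (\<Sum>w\<in>S \<inter> set_mset ?N. count ?N w)" by (simp add: h_def)
  also have "\<dots> \<le> (\<Sum>w\<in>set_mset ?N. count ?N w)" by (intro sum_mono2) auto
  also have "\<dots> = size R" using size_multiset_overloaded_eq[of ?N] by simp
  finally show ?thesis .
qed

lemma eligible_if_pillars:
  assumes "finite S" and "l \<le> card S" and "\<And>w. w \<in> S \<Longrightarrow> pillar R w"
  shows "eligible l R"
proof -
  have "l * hmax R \<le> card S * hmax R" using assms(2) by simp
  also have "\<dots> = (\<Sum>w\<in>S. h R w)" using assms(3) by (simp add: pillar_def)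
  also have "\<dots> \<le> size R" using assms(1) by (rule sum_h_le_size)
  finally show ?thesis by (simp add: eligible_def)
qed

lemma size_le_card_values_mult_hmax:
  "size Q \<le> card (set_mset (image_mset snd Q)) * hmax Q"
proof -
  let ?N = "image_mset snd Q"
  have "size Q = (\<Sum>w\<in>set_mset ?N. h Q w)"
    using size_multiset_overloaded_eq[of ?N] by (simp add: h_def)
  also have "\<dots> \<le> (\<Sum>w\<in>set_mset ?N. hmax Q)" by (intro sum_mono h_le_hmax)
  finally show ?thesis by simp
qed

lemma fat_imp_card_values_gt:
  assumes "fat l Q"
  shows "l < card (set_mset (image_mset snd Q))"
proof -
  have "l * hmax Q < card (set_mset (image_mset snd Q)) * hmax Q"
    using assms size_le_card_values_mult_hmax[of Q] unfolding fat_def by linarith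
  then show ?thesis by (simp add: mult_less_cancel2)
qed

lemma least_alive_value_in_fat_group_not_pillar:
  assumes "\<not> eligible l R" and "q \<in> I" and "\<not> dead l (G q) R" and "fat l (G q)"
    and least: "\<And>w. alive_val l I G R w \<Longrightarrow> h R v \<le> h R w"
  shows "\<not> pillar R v"
proof
  assume "pillar R v"
  let ?S = "set_mset (image_mset snd (G q))"
  have "pillar R w" if "w \<in> ?S" for w
  proof -
    have "alive_val l I G R w"
      using that assms(2,3) unfolding alive_val_def by (auto simp: h_def)
    then show ?thesis
      using least \<open>pillar R v\<close> h_le_hmax[of R w] unfolding pillar_def by (metis le_antisym)
  qed
  then have "eligible l R"
    using fat_imp_card_values_gt[OF assms(4)] by (intro eligible_if_pillars[where S = ?S]) auto
  with assms(1) show False ..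
qed

lemma p2_step_hmax:
  assumes "p2_step l I (G, R) (G', R')"
  shows "hmax R' = hmax R"
proof -
  obtain v q where
      ne: "\<not> eligible l R" and least: "\<And>w. alive_val l I G R w \<Longrightarrow> h R v \<le> h R w" and
      q: "q \<in> I" "\<not> dead l (G q) R" and
      moved: "(fat l (G q) \<and> (\<exists>t. snd t = v \<and> R' = R + {#t#})) \<or>
        (thin l (G q) \<and> (\<exists>M. image_mset snd M = mset_set {w. pillar (G q) w} \<and> R' = R + M))"
    using assms unfolding p2_step_def Let_def fst_conv snd_conv prod.inject by blast
  from moved obtain M where R': "R' = R + M"
    and distinct: "\<And>w. count (image_mset snd M) w \<le> 1"
    and non_pillars: "\<And>w. w \<in># image_mset snd M \<Longrightarrow> \<not> pillar R w"
  proof (elim disjE conjE exE)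
    fix t assume "fat l (G q)" and "snd t = v" and "R' = R + {#t#}"
    moreover have "\<not> pillar R v"
      using least_alive_value_in_fat_group_not_pillar[where G = G, OF ne q] least \<open>fat l (G q)\<close>
      by blast
    ultimately show thesis by (intro that[of "{#t#}"]) auto
  next
    fix M assume "thin l (G q)" and M: "image_mset snd M = mset_set {w. pillar (G q) w}"
      and "R' = R + M"
    have "\<not> conflicting (G q) R" using q \<open>thin l (G q)\<close> by (simp add: dead_def)
    show thesis
    proof (rule that[of M])
      fix w
      show "count (image_mset snd M) w \<le> 1" unfolding M by (simp add: count_mset_set')
      assume "w \<in># image_mset snd M"
      then have "pillar (G q) w"
        unfolding M by (cases "finite {w. pillar (G q) w}") auto
      with \<open>\<not> conflicting (G q) R\<close> show "\<not> pillar R w" by (auto simp: conflicting_def)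
    qed fact
  qed
  show ?thesis unfolding R' using distinct non_pillars by (rule hmax_add_non_pillars)
qed

lemma rtranclp_p2_step_hmax:
  assumes "(p2_step l I)\<^sup>*\<^sup>* (G, R) (G', R')"
  shows "hmax R' = hmax R"
  using assms
proof (induction rule: rtranclp_induct2)
  case refl
  show ?case by (rule refl)
next
  case (step G1 R1 G2 R2)
  from step.hyps(2) have "hmax R2 = hmax R1" by (rule p2_step_hmax)
  with step.IH show ?case by simp
qed

theorem lemma5:
  fixes T :: "('q \<times> 's) multiset" and l :: nat
    and G1 G2 :: "'q \<Rightarrow> ('q \<times> 's) multiset" and D :: "'q \<Rightarrow> ('q \<times> 's) multiset"
    and R1 R2 :: "('q \<times> 's) multiset"
  assumes elig: "eligible l T"
    and phase1: "\<forall>q \<in> fst ` set_mset T. p1 l (group T q) (G1 q) (D q)"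
    and R1: "R1 = (\<Sum>q \<in> fst ` set_mset T. D q)"
    and noterm1: "\<not> eligible l R1"
    and phase2: "(p2_step l (fst ` set_mset T))\<^sup>*\<^sup>* (G1, R1) (G2, R2)"
    and end2: "eligible l R2 \<or> (\<forall>v. \<not> alive_val l (fst ` set_mset T) G2 R2 v)"
  shows "hmax R2 = hmax R1"
  using phase2 by (rule rtranclp_p2_step_hmax)

end
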